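(* Let $I$ be a countable set with $|I|\ge2$, let $\mathfrak{M}_i=(S_i,\mathcal{L}_i)$, $i\in I$, be partial linear spaces and $\mathfrak{M}=\bigotimes_{i\in I}\mathfrak{M}_i$. Every degenerate hyperplane of $\mathfrak{M}$ is not flappy.
   Context: A partial linear space is a pair $(S,\mathcal{L})$ of points and lines such that every line has at least two points, every point lies on a line, two distinct lines share at most one point; points are collinear ($a\sim b$) if on a common line, $[a]_\sim$ is the set of points collinear with $a$. A subspace is a set $X$ such that any line meeting it in at least two points lies in it; a hyperplane is a proper subspace meeting every line. A hyperplane $X$ is flappy if for every line $L\subseteq X$ there is $a\notin X$ with $L\subseteq[a]_\sim$. Segre product: point set $S=\prod_{i\in I}S_i$; for $a\in S$, $x\in S_i$, $a[i/x]$ is $a$ with $i$-th coordinate replaced by $x$, and $a[i/A]=\{a[i/x]:x\in A\}$; lines are $a[i/l]$ for $a\in S$, $i\in I$, $l\in\mathcal{L}_i$. For a hyperplane $\mathcal{H}$ of $\mathfrak{M}$, $\mathcal{H}^{[a]}_i=\{x\in S_i: a[i/x]\in\mathcal{H}\}$; $\mathcal{H}$ is non-degenerate if $\mathcal{H}^{[a]}_i$ is a hyperplane of $\mathfrak{M}_i$ for all $a\in S$, $i\in I$, and degenerate otherwise. *)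

theory Defs
  imports Main "HOL-Library.FuncSet" "HOL-Library.Countable_Set"
begin

definition partial_linear_space :: "'a set \<Rightarrow> 'a set set \<Rightarrow> bool" where
  "partial_linear_space S L \<longleftrightarrow>
     (\<forall>l\<in>L. l \<subseteq> S \<and> (\<exists>x y. x \<in> l \<and> y \<in> l \<and> x \<noteq> y)) \<and>
     (\<forall>a\<in>S. \<exists>l\<in>L. a \<in> l) \<and>
     (\<forall>l\<in>L. \<forall>m\<in>L. l \<noteq> m \<longrightarrow> (\<forall>x y. x \<in> l \<inter> m \<and> y \<in> l \<inter> m \<longrightarrow> x = y))"

definition collinear :: "'a set set \<Rightarrow> 'a \<Rightarrow> 'a \<Rightarrow> bool" where
  "collinear L a b \<longleftrightarrow> (\<exists>l\<in>L. a \<in> l \<and> b \<in> l)"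

definition coll_set :: "'a set \<Rightarrow> 'a set set \<Rightarrow> 'a \<Rightarrow> 'a set" where
  "coll_set S L a = {b \<in> S. collinear L a b}"

definition subspace :: "'a set \<Rightarrow> 'a set set \<Rightarrow> 'a set \<Rightarrow> bool" where
  "subspace S L X \<longleftrightarrow> X \<subseteq> S \<and>
     (\<forall>l\<in>L. (\<exists>x y. x \<noteq> y \<and> x \<in> l \<inter> X \<and> y \<in> l \<inter> X) \<longrightarrow> l \<subseteq> X)"

definition hyperplane :: "'a set \<Rightarrow> 'a set set \<Rightarrow> 'a set \<Rightarrow> bool" where
  "hyperplane S L X \<longleftrightarrow> subspace S L X \<and> X \<noteq> S \<and> (\<forall>l\<in>L. l \<inter> X \<noteq> {})"

definition flappy :: "'a set \<Rightarrow> 'a set set \<Rightarrow> 'a set \<Rightarrow> bool" where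
  "flappy S L X \<longleftrightarrow> (\<forall>l\<in>L. l \<subseteq> X \<longrightarrow> (\<exists>a \<in> S - X. l \<subseteq> coll_set S L a))"

text \<open>Segre product of the family (S i, L i), i \<in> I. Points are the (extensional)
elements of the cartesian product; a[i/x] is the function update a(i := x).\<close>
definition segre_points :: "'i set \<Rightarrow> ('i \<Rightarrow> 'a set) \<Rightarrow> ('i \<Rightarrow> 'a) set" where
  "segre_points I S = (\<Pi>\<^sub>E i\<in>I. S i)"

definition segre_lines :: "'i set \<Rightarrow> ('i \<Rightarrow> 'a set) \<Rightarrow> ('i \<Rightarrow> 'a set set) \<Rightarrow> ('i \<Rightarrow> 'a) set set" where
  "segre_lines I S L = {(\<lambda>x. a(i := x)) ` l | a i l. a \<in> segre_points I S \<and> i \<in> I \<and> l \<in> L i}"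

definition hyp_section :: "('i \<Rightarrow> 'a set) \<Rightarrow> ('i \<Rightarrow> 'a) set \<Rightarrow> ('i \<Rightarrow> 'a) \<Rightarrow> 'i \<Rightarrow> 'a set" where
  "hyp_section S H a i = {x \<in> S i. a(i := x) \<in> H}"

definition non_degenerate :: "'i set \<Rightarrow> ('i \<Rightarrow> 'a set) \<Rightarrow> ('i \<Rightarrow> 'a set set) \<Rightarrow> ('i \<Rightarrow> 'a) set \<Rightarrow> bool" where
  "non_degenerate I S L H \<longleftrightarrow>
     (\<forall>a \<in> segre_points I S. \<forall>i \<in> I. hyperplane (S i) (L i) (hyp_section S H a i))"

definition degenerate :: "'i set \<Rightarrow> ('i \<Rightarrow> 'a set) \<Rightarrow> ('i \<Rightarrow> 'a set set) \<Rightarrow> ('i \<Rightarrow> 'a) set \<Rightarrow> bool" where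
  "degenerate I S L H \<longleftrightarrow> \<not> non_degenerate I S L H"

end

theory Submission
  imports Defs
begin

text \<open>A degenerate hyperplane \<open>H\<close> contains a whole fibre \<open>a[i/S\<^sub>i]\<close>: every section
  \<open>H\<^sub>i\<^sup>[\<^sup>a\<^sup>]\<close> is a subspace meeting every line, so a section failing to be a hyperplane is all
  of \<open>S\<^sub>i\<close>. Take a line \<open>a[i/l]\<close> of that fibre. A point \<open>b\<close> collinear with two distinct
  points \<open>a[i/x]\<close>, \<open>a[i/y]\<close> of it differs from each in at most one coordinate, and since
  these two differ at \<open>i\<close>, \<open>b\<close> agrees with \<open>a\<close> off \<open>i\<close>. So \<open>b\<close> lies in the fibre, hence
  in \<open>H\<close>, and the line \<open>a[i/l]\<close> witnesses that \<open>H\<close> is not flappy.\<close>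

lemma fun_upd_image_in_segre_lines:
  assumes "a \<in> segre_points I S" "i \<in> I" "l \<in> L i"
  shows "(\<lambda>x. a(i := x)) ` l \<in> segre_lines I S L"
  using assms unfolding segre_lines_def by blast

lemma segre_collinear_imp_agree_off:
  assumes "collinear (segre_lines I S L) b d"
  obtains k where "\<forall>j. j \<noteq> k \<longrightarrow> b j = d j"
proof -
  from assms obtain ln where ln: "ln \<in> segre_lines I S L" "b \<in> ln" "d \<in> ln"
    unfolding collinear_def by blast
  then obtain c k m where "ln = (\<lambda>x. c(k := x)) ` m"
    unfolding segre_lines_def by blast
  with ln obtain z1 z2 where "b = c(k := z1)" "d = c(k := z2)" by blast
  then show thesis using that[of k] by auto
qed

lemma agree_off_two_updates_imp_fun_upd:
  assumes "x \<noteq> y"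
    and "\<forall>j. j \<noteq> k1 \<longrightarrow> b j = (a(i := x)) j"
    and "\<forall>j. j \<noteq> k2 \<longrightarrow> b j = (a(i := y)) j"
  shows "b = a(i := b i)"
proof
  fix j
  show "b j = (a(i := b i)) j"
  proof (cases "j = i")
    case False
    show ?thesis
    proof (rule ccontr)
      assume "b j \<noteq> (a(i := b i)) j"
      with False assms(2,3) have "j = k1" "j = k2" by auto
      with False assms have "b i = x" "b i = y" by auto
      with \<open>x \<noteq> y\<close> show False by simp
    qed
  qed simp
qed

lemma hyp_section_subspace:
  assumes "subspace (segre_points I S) (segre_lines I S L) H"
    and "partial_linear_space (S i) (L i)"
    and "a \<in> segre_points I S" "i \<in> I"
  shows "subspace (S i) (L i) (hyp_section S H a i)"
  unfolding subspace_def
proof (intro conjI ballI impI)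
  show "hyp_section S H a i \<subseteq> S i" unfolding hyp_section_def by auto
next
  fix l
  assume l: "l \<in> L i"
    and "\<exists>x y. x \<noteq> y \<and> x \<in> l \<inter> hyp_section S H a i \<and> y \<in> l \<inter> hyp_section S H a i"
  then obtain x y where xy: "x \<noteq> y" "x \<in> l" "y \<in> l" "a(i := x) \<in> H" "a(i := y) \<in> H"
    unfolding hyp_section_def by blast
  have "a(i := x) \<noteq> a(i := y)" using xy(1) by (metis fun_upd_same)
  then have "(\<lambda>x. a(i := x)) ` l \<subseteq> H"
    using assms(1) fun_upd_image_in_segre_lines[where L = L, OF assms(3,4) l] xy
    unfolding subspace_def by blast
  moreover have "l \<subseteq> S i" using assms(2) l unfolding partial_linear_space_def by blast
  ultimately show "l \<subseteq> hyp_section S H a i" unfolding hyp_section_def by blast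
qed

lemma hyp_section_meets_lines:
  assumes "\<forall>l\<in>segre_lines I S L. l \<inter> H \<noteq> {}"
    and "partial_linear_space (S i) (L i)"
    and "a \<in> segre_points I S" "i \<in> I" "l \<in> L i"
  shows "l \<inter> hyp_section S H a i \<noteq> {}"
proof -
  obtain x where "x \<in> l" "a(i := x) \<in> H"
    using assms(1) fun_upd_image_in_segre_lines[where L = L, OF assms(3-5)] by blast
  moreover have "l \<subseteq> S i" using assms(2,5) unfolding partial_linear_space_def by blast
  ultimately show ?thesis unfolding hyp_section_def by blast
qed

lemma degenerate_hyperplane_contains_fibre:
  assumes "\<forall>i\<in>I. partial_linear_space (S i) (L i)"
    and "hyperplane (segre_points I S) (segre_lines I S L) H"
    and "degenerate I S L H"
  obtains a i where "a \<in> segre_points I S" "i \<in> I" "hyp_section S H a i = S i"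
proof -
  from assms(3) obtain a i where a: "a \<in> segre_points I S" and i: "i \<in> I"
    and "\<not> hyperplane (S i) (L i) (hyp_section S H a i)"
    unfolding degenerate_def non_degenerate_def by blast
  moreover have "subspace (S i) (L i) (hyp_section S H a i)"
    using hyp_section_subspace[OF _ _ a i] assms(1,2) i unfolding hyperplane_def by blast
  moreover have "\<forall>l\<in>L i. l \<inter> hyp_section S H a i \<noteq> {}"
    using hyp_section_meets_lines[OF _ _ a i] assms(1,2) i unfolding hyperplane_def by blast
  ultimately show thesis using that[OF a i] unfolding hyperplane_def by blast
qed

lemma not_flappy_if_fibre_contained:
  assumes "partial_linear_space (S i) (L i)"
    and "a \<in> segre_points I S" "i \<in> I"
    and fibre: "hyp_section S H a i = S i"
  shows "\<not> flappy (segre_points I S) (segre_lines I S L) H"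
proof
  assume flappy: "flappy (segre_points I S) (segre_lines I S L) H"
  have in_H: "a(i := x) \<in> H" if "x \<in> S i" for x
    using fibre that unfolding hyp_section_def by blast
  have "a i \<in> S i" using assms(2,3) unfolding segre_points_def by auto
  then obtain l where l: "l \<in> L i"
    using assms(1) unfolding partial_linear_space_def by meson
  have "l \<subseteq> S i" and "\<exists>x y. x \<in> l \<and> y \<in> l \<and> x \<noteq> y"
    using assms(1) l unfolding partial_linear_space_def by simp_all
  then obtain x y where xy: "x \<in> l" "y \<in> l" "x \<noteq> y" by blast
  from \<open>l \<subseteq> S i\<close> have "(\<lambda>x. a(i := x)) ` l \<subseteq> H" using in_H by blast
  with flappy fun_upd_image_in_segre_lines[where L = L, OF assms(2,3) l]
  obtain b where b: "b \<in> segre_points I S" "b \<notin> H"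
    and coll: "(\<lambda>x. a(i := x)) ` l \<subseteq> coll_set (segre_points I S) (segre_lines I S L) b"
    unfolding flappy_def by blast
  have "collinear (segre_lines I S L) b (a(i := x))" "collinear (segre_lines I S L) b (a(i := y))"
    using coll xy(1,2) unfolding coll_set_def by auto
  then obtain k1 k2 where "\<forall>j. j \<noteq> k1 \<longrightarrow> b j = (a(i := x)) j"
    and "\<forall>j. j \<noteq> k2 \<longrightarrow> b j = (a(i := y)) j"
    by (elim segre_collinear_imp_agree_off)
  with xy(3) have b_eq: "b = a(i := b i)" by (rule agree_off_two_updates_imp_fun_upd)
  have "b i \<in> S i" using b(1) assms(3) unfolding segre_points_def by auto
  then have "a(i := b i) \<in> H" by (rule in_H)
  then have "b \<in> H" by (simp only: b_eq[symmetric])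
  with b(2) show False by contradiction
qed

theorem lemma3p7:
  fixes I :: "'i set" and S :: "'i \<Rightarrow> 'a set" and L :: "'i \<Rightarrow> 'a set set"
    and H :: "('i \<Rightarrow> 'a) set"
  assumes "countable I"
    and "\<exists>i\<in>I. \<exists>j\<in>I. i \<noteq> j"
    and "\<forall>i\<in>I. partial_linear_space (S i) (L i)"
    and "hyperplane (segre_points I S) (segre_lines I S L) H"
    and "degenerate I S L H"
  shows "\<not> flappy (segre_points I S) (segre_lines I S L) H"
proof -
  obtain a i where a: "a \<in> segre_points I S" and i: "i \<in> I"
    and fibre: "hyp_section S H a i = S i"
    using assms(3-5) by (rule degenerate_hyperplane_contains_fibre)
  from assms(3) i have "partial_linear_space (S i) (L i)" ..
  then show ?thesis using a i fibre by (rule not_flappy_if_fibre_contained)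
qed

end
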